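(* Let $\nu\in(0,1]$, $\varrho,c_l,\alpha,\delta>0$, $x\in K_\nu^\varrho$, $g^\delta\in\mathbb Y$ with $\|g^\delta-Ax\|_{\mathbb Y}\le\delta$, and $\hat x_\alpha\in R_\alpha(g^\delta)$. If $c_l\varrho^{-1/\nu}\delta^{1/\nu}\le\alpha$, then $\varrho_\nu(\hat x_\alpha)\le(2+c_l^{-\nu})\varrho$.
   Context: Standing setting: $\mathbb X$ real Banach space, $\tau$ a topology with $(\mathbb X,\tau)$ locally convex Hausdorff; $\mathcal R:\mathbb X\to(-\infty,\infty]$ proper convex with $\tau$-compact sublevel sets; $\mathbb Y$ real Hilbert space; $A:\mathbb X\to\mathbb Y$ linear, $\tau$-to-weak continuous. $T_\alpha(x,g):=\frac1{2\alpha}\|g-Ax\|_{\mathbb Y}^2+\mathcal R(x)$, $R_\alpha(g):=\operatorname{argmin}_{x\in\mathrm{dom}(\mathcal R)}T_\alpha(x,g)$. For $\nu\ge0$, $\varrho_\nu(x):=\sup\{\alpha^{-\nu}\|Ax-Ax_\alpha\|_{\mathbb Y}:\alpha>0,x_\alpha\in R_\alpha(Ax)\}$ and $K_\nu^\varrho:=\{x\in\mathbb X:\varrho_\nu(x)\le\varrho\}$. *)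

theory Defs
  imports "HOL-Analysis.Analysis"
begin

definition locally_convex_hausdorff :: "'a::real_vector topology \<Rightarrow> bool" where
  "locally_convex_hausdorff \<tau> \<longleftrightarrow>
     topspace \<tau> = UNIV \<and> Hausdorff_space \<tau> \<and>
     continuous_map (prod_topology \<tau> \<tau>) \<tau> (\<lambda>(x, y). x + y) \<and>
     continuous_map (prod_topology euclideanreal \<tau>) \<tau> (\<lambda>(c, x). c *\<^sub>R x) \<and>
     (\<forall>U x. openin \<tau> U \<and> x \<in> U \<longrightarrow> (\<exists>V. openin \<tau> V \<and> convex V \<and> x \<in> V \<and> V \<subseteq> U))"

definition weak_topology :: "'b::real_inner topology" where
  "weak_topology = topology_generated_by {{y. y \<bullet> z \<in> U} | z U. open U}"

definition proper_convex :: "('a::real_vector \<Rightarrow> ereal) \<Rightarrow> bool" where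
  "proper_convex R \<longleftrightarrow> (\<forall>x. R x \<noteq> -\<infinity>) \<and> (\<exists>x. R x \<noteq> \<infinity>) \<and>
     (\<forall>x y t. 0 < t \<and> t < 1 \<longrightarrow>
        R (t *\<^sub>R x + (1 - t) *\<^sub>R y) \<le> ereal t * R x + ereal (1 - t) * R y)"

definition domR :: "('a \<Rightarrow> ereal) \<Rightarrow> 'a set" where
  "domR R = {x. R x \<noteq> \<infinity>}"

definition Tik :: "('a \<Rightarrow> 'b::real_normed_vector) \<Rightarrow> ('a \<Rightarrow> ereal) \<Rightarrow> real \<Rightarrow> 'a \<Rightarrow> 'b \<Rightarrow> ereal" where
  "Tik A R \<alpha> x g = ereal ((norm (g - A x))\<^sup>2 / (2 * \<alpha>)) + R x"

definition Rmin :: "('a \<Rightarrow> 'b::real_normed_vector) \<Rightarrow> ('a \<Rightarrow> ereal) \<Rightarrow> real \<Rightarrow> 'b \<Rightarrow> 'a set" where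
  "Rmin A R \<alpha> g = {x \<in> domR R. \<forall>y \<in> domR R. Tik A R \<alpha> x g \<le> Tik A R \<alpha> y g}"

definition varrho :: "('a \<Rightarrow> 'b::real_normed_vector) \<Rightarrow> ('a \<Rightarrow> ereal) \<Rightarrow> real \<Rightarrow> 'a \<Rightarrow> ereal" where
  "varrho A R \<nu> x = Sup {ereal (\<alpha> powr (-\<nu>) * norm (A x - A xa)) | \<alpha> xa. \<alpha> > 0 \<and> xa \<in> Rmin A R \<alpha> (A x)}"

definition Kset :: "('a \<Rightarrow> 'b::real_normed_vector) \<Rightarrow> ('a \<Rightarrow> ereal) \<Rightarrow> real \<Rightarrow> real \<Rightarrow> 'a set" where
  "Kset A R \<nu> \<rho> = {x. varrho A R \<nu> x \<le> ereal \<rho>}"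

end

theory Submission
  imports Defs
begin

(* Minimisers of the Tikhonov functional satisfy a variational inequality. It makes
   g |-> A x_alpha(g) firmly nonexpansive, and comparing x_alpha(g) with x_beta(A x_alpha(g))
   gives |A x_alpha - A x_beta| <= (beta/alpha) |g - A x_alpha|.
   For x in K and x_alpha in R_alpha(A x), nonexpansiveness bounds both the residual of xhat and
   |A xhat - A x| by delta + rho alpha^nu <= (1 + c^-nu) rho alpha^nu. For beta <= alpha the ratio
   estimate and monotonicity of t^(nu-1) give the claim; for beta > alpha one compares
   xhat_beta with R_beta(A x), uses nonexpansiveness again and alpha^nu <= beta^nu.
   All comparison points exist: the Tikhonov functional has tau-compact sublevel sets and is
   tau-lower semicontinuous, since A is weakly continuous and the norm is weakly lsc. *)

lemma openin_weak_topology_inner_gt: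
  "openin (weak_topology :: 'b::real_inner topology) {y. t < y \<bullet> z}"
proof -
  have "{y. t < y \<bullet> z} \<in> {{y::'b. y \<bullet> z \<in> U} | z U. open U}"
    by (intro CollectI exI[of _ z] exI[of _ "{t<..}"]) auto
  then show ?thesis
    unfolding weak_topology_def by (rule topology_generated_by_Basis)
qed

lemma openin_weak_topology_norm_gt:
  "openin (weak_topology :: 'b::real_inner topology) {y. t < norm (y - g)}"
proof -
  have "{y. t < norm (y - g)} = (\<Union>z\<in>cball 0 1. {y. t < (y - g) \<bullet> z})"
  proof (intro equalityI subsetI)
    fix y assume "y \<in> {y. t < norm (y - g)}"
    then have "t < norm (y - g)" by simp
    show "y \<in> (\<Union>z\<in>cball 0 1. {y. t < (y - g) \<bullet> z})"
    proof (cases "y = g")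
      case True
      then show ?thesis using \<open>t < norm (y - g)\<close> by (intro UN_I[of 0]) auto
    next
      case False
      define z where "z = (y - g) /\<^sub>R norm (y - g)"
      have "(y - g) \<bullet> z = norm (y - g)"
        using False by (simp add: z_def divide_simps power2_norm_eq_inner[symmetric] power2_eq_square)
      then show ?thesis using \<open>t < norm (y - g)\<close> False
        by (intro UN_I[of z]) (auto simp: z_def)
    qed
  next
    fix y assume "y \<in> (\<Union>z\<in>cball 0 1. {y. t < (y - g) \<bullet> z})"
    then obtain z where "norm z \<le> 1" "t < (y - g) \<bullet> z" by auto
    moreover have "(y - g) \<bullet> z \<le> norm (y - g) * norm z"
      by (rule norm_cauchy_schwarz)
    moreover have "norm (y - g) * norm z \<le> norm (y - g)"
      using \<open>norm z \<le> 1\<close> by (intro mult_left_le) auto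
    ultimately show "y \<in> {y. t < norm (y - g)}" by simp
  qed
  moreover have "{y. t < (y - g) \<bullet> z} = {y. t + g \<bullet> z < y \<bullet> z}" for z
    by (auto simp: inner_diff_left)
  ultimately show ?thesis
    by (auto intro!: openin_weak_topology_inner_gt)
qed

lemma openin_Tik_fidelity_gt:
  fixes A :: "'a \<Rightarrow> 'b::real_inner"
  assumes "topspace \<tau> = UNIV" "continuous_map \<tau> weak_topology A" "0 < \<alpha>"
  shows "openin \<tau> {z. s < (norm (g - A z))\<^sup>2 / (2 * \<alpha>)}"
proof -
  have "sqrt (2 * \<alpha> * s) < n \<longleftrightarrow> s < n\<^sup>2 / (2 * \<alpha>)" if "0 \<le> n" for n :: real
  proof -
    have "sqrt (2 * \<alpha> * s) < n \<longleftrightarrow> sqrt (2 * \<alpha> * s) < sqrt (n\<^sup>2)"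
      using that by simp
    also have "\<dots> \<longleftrightarrow> 2 * \<alpha> * s < n\<^sup>2"
      by (rule real_sqrt_less_iff)
    also have "\<dots> \<longleftrightarrow> s < n\<^sup>2 / (2 * \<alpha>)"
      using \<open>0 < \<alpha>\<close> by (simp add: field_simps)
    finally show ?thesis .
  qed
  then have "{z. s < (norm (g - A z))\<^sup>2 / (2 * \<alpha>)}
      = {z \<in> topspace \<tau>. A z \<in> {y. sqrt (2 * \<alpha> * s) < norm (y - g)}}"
    using assms(1) by (auto simp: norm_minus_commute)
  then show ?thesis
    using openin_continuous_map_preimage[OF assms(2) openin_weak_topology_norm_gt] by simp
qed

lemma closedin_Tik_sublevel:
  fixes A :: "'a \<Rightarrow> 'b::real_inner"
  assumes top: "topspace \<tau> = UNIV"
    and R_lsc: "\<And>c::real. closedin \<tau> {z. R z \<le> ereal c}"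
    and A_cont: "continuous_map \<tau> weak_topology A" and "0 < \<alpha>"
  shows "closedin \<tau> {z. Tik A R \<alpha> z g \<le> ereal t}"
proof -
  let ?q = "\<lambda>z. (norm (g - A z))\<^sup>2 / (2 * \<alpha>)"
  have R_gt: "openin \<tau> {z. ereal r < R z}" for r
  proof -
    have "{z. ereal r < R z} = topspace \<tau> - {z. R z \<le> ereal r}"
      using top by auto
    then show ?thesis
      using R_lsc by auto
  qed
  have "{z. ereal t < Tik A R \<alpha> z g} = (\<Union>r. {z. t - r < ?q z} \<inter> {z. ereal r < R z})"
  proof (intro equalityI subsetI)
    fix z assume "z \<in> {z. ereal t < Tik A R \<alpha> z g}"
    then have "ereal (t - ?q z) < R z"
      unfolding Tik_def by (cases "R z") auto
    then obtain r where "ereal (t - ?q z) < ereal r" "ereal r < R z"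
      using ereal_dense2 by blast
    then show "z \<in> (\<Union>r. {z. t - r < ?q z} \<inter> {z. ereal r < R z})"
      by (intro UN_I[of r]) auto
  next
    fix z assume "z \<in> (\<Union>r. {z. t - r < ?q z} \<inter> {z. ereal r < R z})"
    then obtain r where "t - r < ?q z" "ereal r < R z"
      by auto
    then show "z \<in> {z. ereal t < Tik A R \<alpha> z g}"
      unfolding Tik_def by (cases "R z") auto
  qed
  moreover have "openin \<tau> ({z. t - r < ?q z} \<inter> {z. ereal r < R z})" for r
    by (intro openin_Int openin_Tik_fidelity_gt[OF top A_cont \<open>0 < \<alpha>\<close>] R_gt)
  ultimately have "openin \<tau> {z. ereal t < Tik A R \<alpha> z g}"
    by (metis (no_types, lifting) imageE openin_Union)
  moreover have "{z. ereal t < Tik A R \<alpha> z g} = topspace \<tau> - {z. Tik A R \<alpha> z g \<le> ereal t}"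
    using top by auto
  ultimately show ?thesis
    using top by (simp add: closedin_def)
qed

lemma compactin_attains_min_ereal:
  fixes f :: "'a \<Rightarrow> ereal"
  assumes K: "compactin X K" "K \<noteq> {}"
    and f_lsc: "\<And>s::real. closedin X {z \<in> topspace X. f z \<le> ereal s}"
  shows "\<exists>z\<in>K. \<forall>y\<in>K. f z \<le> f y"
proof -
  define m where "m = (INF y\<in>K. f y)"
  define level where "level s = {z \<in> topspace X. f z \<le> ereal s}" for s
  have fip: "\<forall>F. finite F \<and> F \<subseteq> level ` {s. m < ereal s} \<longrightarrow> K \<inter> \<Inter>F \<noteq> {}"
  proof (intro allI impI, elim conjE)
    fix F assume "finite F" "F \<subseteq> level ` {s. m < ereal s}"
    then obtain S where S: "finite S" "S \<subseteq> {s. m < ereal s}" "F = level ` S"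
      by (meson finite_subset_image)
    show "K \<inter> \<Inter>F \<noteq> {}"
    proof (cases "S = {}")
      case True
      then show ?thesis using S K by auto
    next
      case False
      then have "Min S \<in> S"
        using S(1) by (rule Min_in[rotated])
      then have "m < ereal (Min S)"
        using S(2) by blast
      then obtain z where "z \<in> K" and z_below: "f z < ereal (Min S)"
        unfolding m_def by (auto simp: Inf_less_iff)
      have "z \<in> level s" if "s \<in> S" for s
      proof -
        have "ereal (Min S) \<le> ereal s"
          using Min_le[OF S(1) that] by simp
        then have "f z \<le> ereal s"
          by (rule order_trans[OF less_imp_le[OF z_below]])
        moreover have "z \<in> topspace X"
          using \<open>z \<in> K\<close> compactin_subset_topspace[OF K(1)] by blast
        ultimately show ?thesis
          unfolding level_def by simp
      qed
      then show ?thesis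
        using S(3) \<open>z \<in> K\<close> by blast
    qed
  qed
  have "\<forall>C\<in>level ` {s. m < ereal s}. closedin X C"
    using f_lsc unfolding level_def by blast
  then have "K \<inter> \<Inter>(level ` {s. m < ereal s}) \<noteq> {}"
    using compactin_fip[THEN iffD1, OF K(1), THEN conjunct2, rule_format] fip by blast
  then obtain z where z: "z \<in> K" "\<And>s. m < ereal s \<Longrightarrow> f z \<le> ereal s"
    unfolding level_def by blast
  have "f z \<le> m"
  proof (rule dense_ge)
    fix y assume "m < y"
    then obtain s where "m < ereal s" "ereal s < y"
      using ereal_dense2 by blast
    then show "f z \<le> y"
      using z(2) by (meson less_imp_le order_trans)
  qed
  show ?thesis
  proof (intro bexI ballI)
    fix y assume "y \<in> K"
    then have "m \<le> f y"
      unfolding m_def by (rule INF_lower)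
    with \<open>f z \<le> m\<close> show "f z \<le> f y"
      by (rule order_trans)
  qed (rule z(1))
qed

lemma Rmin_nonempty:
  fixes A :: "'a::real_vector \<Rightarrow> 'b::real_inner"
  assumes top: "topspace \<tau> = UNIV" and "Hausdorff_space \<tau>"
    and R_compact: "\<And>c::real. compactin \<tau> {z. R z \<le> ereal c}"
    and A_cont: "continuous_map \<tau> weak_topology A" and "0 < \<alpha>"
    and "proper_convex R"
  shows "Rmin A R \<alpha> g \<noteq> {}"
proof -
  let ?T = "\<lambda>z. Tik A R \<alpha> z g"
  have R_lsc: "closedin \<tau> {z. R z \<le> ereal c}" for c
    using compactin_imp_closedin[OF \<open>Hausdorff_space \<tau>\<close> R_compact] .
  obtain x0 where "R x0 \<noteq> \<infinity>" and "R x0 \<noteq> -\<infinity>"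
    using \<open>proper_convex R\<close> unfolding proper_convex_def by blast
  then obtain c where "?T x0 = ereal c"
    unfolding Tik_def by (cases "R x0") auto
  define K where "K = {z. ?T z \<le> ereal c}"
  have K_sub: "K \<subseteq> {z. R z \<le> ereal c}"
  proof
    fix z assume "z \<in> K"
    then have "ereal ((norm (g - A z))\<^sup>2 / (2 * \<alpha>)) + R z \<le> ereal c"
      unfolding K_def Tik_def by simp
    moreover have "0 \<le> (norm (g - A z))\<^sup>2 / (2 * \<alpha>)"
      using \<open>0 < \<alpha>\<close> by simp
    ultimately show "z \<in> {z. R z \<le> ereal c}"
      by (cases "R z") auto
  qed
  have "compactin \<tau> K"
    using closed_compactin[OF R_compact K_sub] closedin_Tik_sublevel[OF top R_lsc A_cont \<open>0 < \<alpha>\<close>]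
    unfolding K_def by blast
  moreover have "x0 \<in> K"
    using \<open>?T x0 = ereal c\<close> unfolding K_def by simp
  moreover have "closedin \<tau> {z \<in> topspace \<tau>. ?T z \<le> ereal s}" for s
    using closedin_Tik_sublevel[OF top R_lsc A_cont \<open>0 < \<alpha>\<close>] top by simp
  ultimately obtain z where "z \<in> K" and z_min: "\<forall>y\<in>K. ?T z \<le> ?T y"
    using compactin_attains_min_ereal[of \<tau> K ?T] by blast
  have "?T z \<le> ?T y" for y
  proof (cases "y \<in> K")
    case False
    then have "ereal c < ?T y"
      unfolding K_def by simp
    moreover have "?T z \<le> ereal c"
      using \<open>z \<in> K\<close> unfolding K_def by simp
    ultimately show ?thesis
      by (meson less_imp_le order_trans)
  qed (use z_min in blast)
  moreover have "z \<in> domR R"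
    using \<open>z \<in> K\<close> unfolding K_def Tik_def domR_def by auto
  ultimately show ?thesis
    unfolding Rmin_def by blast
qed

lemma Rmin_variational_inequality:
  fixes A :: "'a::real_vector \<Rightarrow> 'b::real_inner"
  assumes "proper_convex R" and "linear A" and "0 < \<alpha>"
    and x: "x \<in> Rmin A R \<alpha> g" and "y \<in> domR R"
  shows "(g - A x) \<bullet> (A y - A x) \<le> \<alpha> * (real_of_ereal (R y) - real_of_ereal (R x))"
proof -
  have R_finite: "\<exists>r. R z = ereal r" if "z \<in> domR R" for z
    using that \<open>proper_convex R\<close> unfolding domR_def proper_convex_def by (cases "R z") auto
  obtain rx ry where R_x: "R x = ereal rx" and R_y: "R y = ereal ry"
    using R_finite x \<open>y \<in> domR R\<close> unfolding Rmin_def by blast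
  define e where "e = g - A x"
  define w where "w = A y - A x"
  have tangent: "e \<bullet> w \<le> t * (w \<bullet> w / 2) + \<alpha> * (ry - rx)" if "0 < t" "t < 1" for t
  proof -
    define z where "z = t *\<^sub>R y + (1 - t) *\<^sub>R x"
    have "R z \<le> ereal t * R y + ereal (1 - t) * R x"
      using \<open>proper_convex R\<close> that unfolding proper_convex_def z_def by blast
    then have "R z \<le> ereal (t * ry + (1 - t) * rx)"
      by (simp add: R_x R_y)
    moreover have "R z \<noteq> -\<infinity>"
      using \<open>proper_convex R\<close> unfolding proper_convex_def by blast
    ultimately obtain rz where R_z: "R z = ereal rz" and rz: "rz \<le> t * ry + (1 - t) * rx"
      by (cases "R z") auto
    then have "Tik A R \<alpha> x g \<le> Tik A R \<alpha> z g"
      using x unfolding Rmin_def domR_def by auto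
    moreover have "A z = t *\<^sub>R A y + (1 - t) *\<^sub>R A x"
      unfolding z_def by (simp add: linear_add[OF \<open>linear A\<close>] linear_scale[OF \<open>linear A\<close>])
    then have "g - A z = e - t *\<^sub>R w"
      unfolding e_def w_def by (simp add: algebra_simps)
    ultimately have "(norm e)\<^sup>2 / (2 * \<alpha>) + rx \<le> (norm (e - t *\<^sub>R w))\<^sup>2 / (2 * \<alpha>) + rz"
      unfolding Tik_def by (simp add: R_x R_z e_def)
    then have "(norm e)\<^sup>2 + 2 * \<alpha> * rx \<le> (norm (e - t *\<^sub>R w))\<^sup>2 + 2 * \<alpha> * rz"
      using mult_left_mono[of _ _ "2 * \<alpha>"] \<open>0 < \<alpha>\<close> by (fastforce simp: distrib_left)
    moreover have "(norm (e - t *\<^sub>R w))\<^sup>2 = (norm e)\<^sup>2 - 2 * t * (e \<bullet> w) + t\<^sup>2 * (w \<bullet> w)"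
      unfolding power2_norm_eq_inner
      by (simp add: inner_diff_left inner_diff_right inner_commute power2_eq_square)
    moreover have "2 * \<alpha> * (rz - rx) \<le> 2 * \<alpha> * (t * (ry - rx))"
      using rz \<open>0 < \<alpha>\<close> by (intro mult_left_mono) (auto simp: algebra_simps)
    ultimately have "0 \<le> t * (t * (w \<bullet> w) - 2 * (e \<bullet> w) + 2 * \<alpha> * (ry - rx))"
      unfolding power2_eq_square by (simp add: algebra_simps)
    then show ?thesis
      using \<open>0 < t\<close> by (simp add: zero_le_mult_iff)
  qed
  have "((\<lambda>t. t * (w \<bullet> w / 2) + \<alpha> * (ry - rx)) \<longlongrightarrow> \<alpha> * (ry - rx)) (at_right 0)"
    by (auto intro!: tendsto_eq_intros)
  moreover have "\<forall>\<^sub>F t in at_right 0. e \<bullet> w \<le> t * (w \<bullet> w / 2) + \<alpha> * (ry - rx)"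
    using eventually_at_right_real[OF zero_less_one] by eventually_elim (intro tangent; simp)
  ultimately have "e \<bullet> w \<le> \<alpha> * (ry - rx)"
    by (rule tendsto_lowerbound) simp
  then show ?thesis
    by (simp add: e_def w_def R_x R_y)
qed

lemma inner_self_le_imp_norm_le:
  fixes x y :: "'b::real_inner"
  assumes "x \<bullet> x \<le> y \<bullet> x"
  shows "norm x \<le> norm y"
proof (cases "x = 0")
  case False
  have "norm x * norm x \<le> norm y * norm x"
    using assms norm_cauchy_schwarz[of y x] by (simp add: dot_square_norm power2_eq_square)
  then show ?thesis
    using False by (simp add: mult_right_le_imp_le)
qed simp

lemma Rmin_firmly_nonexpansive:
  fixes A :: "'a::real_vector \<Rightarrow> 'b::real_inner"
  assumes "proper_convex R" and "linear A" and "0 < \<alpha>"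
    and x1: "x1 \<in> Rmin A R \<alpha> g1" and x2: "x2 \<in> Rmin A R \<alpha> g2"
  shows "(A x1 - A x2) \<bullet> (A x1 - A x2) \<le> (g1 - g2) \<bullet> (A x1 - A x2)"
proof -
  have "x1 \<in> domR R" "x2 \<in> domR R"
    using x1 x2 unfolding Rmin_def by auto
  then have "(g1 - A x1) \<bullet> (A x2 - A x1) + (g2 - A x2) \<bullet> (A x1 - A x2) \<le> 0"
    using Rmin_variational_inequality[OF assms(1-3) x1 \<open>x2 \<in> domR R\<close>]
      Rmin_variational_inequality[OF assms(1-3) x2 \<open>x1 \<in> domR R\<close>]
    by (simp add: right_diff_distrib)
  then show ?thesis
    by (simp add: inner_diff_left inner_diff_right inner_commute algebra_simps)
qed

lemma Rmin_nonexpansive: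
  fixes A :: "'a::real_vector \<Rightarrow> 'b::real_inner"
  assumes "proper_convex R" and "linear A" and "0 < \<alpha>"
    and "x1 \<in> Rmin A R \<alpha> g1" and "x2 \<in> Rmin A R \<alpha> g2"
  shows "norm (A x1 - A x2) \<le> norm (g1 - g2)"
    and "norm ((g1 - g2) - (A x1 - A x2)) \<le> norm (g1 - g2)"
proof -
  let ?u = "A x1 - A x2" and ?h = "g1 - g2"
  have firm: "?u \<bullet> ?u \<le> ?h \<bullet> ?u"
    by (rule Rmin_firmly_nonexpansive[OF assms])
  then show "norm ?u \<le> norm ?h"
    by (rule inner_self_le_imp_norm_le)
  have "(?h - ?u) \<bullet> (?h - ?u) \<le> ?h \<bullet> ?h"
    using firm inner_ge_zero[of ?u] by (simp add: inner_diff_left inner_diff_right inner_commute)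
  then show "norm (?h - ?u) \<le> norm ?h"
    by (simp add: norm_eq_sqrt_inner)
qed

lemma Rmin_iterate_le:
  fixes A :: "'a::real_vector \<Rightarrow> 'b::real_inner"
  assumes "proper_convex R" and "linear A" and "0 < \<alpha>" and "0 < \<beta>"
    and xa: "xa \<in> Rmin A R \<alpha> g" and xb: "xb \<in> Rmin A R \<beta> (A xa)"
  shows "norm (A xa - A xb) \<le> \<beta> / \<alpha> * norm (g - A xa)"
proof -
  define d where "d = A xa - A xb"
  define e where "e = g - A xa"
  have "xa \<in> domR R" "xb \<in> domR R"
    using xa xb unfolding Rmin_def by auto
  then have "d \<bullet> d \<le> \<beta> * (real_of_ereal (R xa) - real_of_ereal (R xb))"
    and "real_of_ereal (R xa) - real_of_ereal (R xb) \<le> (e \<bullet> d) / \<alpha>"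
    using Rmin_variational_inequality[OF assms(1,2,4) xb \<open>xa \<in> domR R\<close>]
      Rmin_variational_inequality[OF assms(1-3) xa \<open>xb \<in> domR R\<close>] \<open>0 < \<alpha>\<close>
    by (auto simp: d_def e_def inner_diff_right field_simps)
  then have "d \<bullet> d \<le> \<beta> * ((e \<bullet> d) / \<alpha>)"
    using \<open>0 < \<beta>\<close> by (meson less_imp_le mult_left_mono order_trans)
  also have "\<dots> = (\<beta> / \<alpha>) *\<^sub>R e \<bullet> d"
    by simp
  finally have "d \<bullet> d \<le> (\<beta> / \<alpha>) *\<^sub>R e \<bullet> d" .
  then have "norm d \<le> norm ((\<beta> / \<alpha>) *\<^sub>R e)"
    by (rule inner_self_le_imp_norm_le)
  then show ?thesis
    using \<open>0 < \<alpha>\<close> \<open>0 < \<beta>\<close> by (simp add: d_def e_def)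
qed

lemma varrho_le_iff:
  "varrho A R \<nu> x \<le> ereal \<rho> \<longleftrightarrow>
     (\<forall>\<beta> z. 0 < \<beta> \<longrightarrow> z \<in> Rmin A R \<beta> (A x) \<longrightarrow> norm (A x - A z) \<le> \<rho> * \<beta> powr \<nu>)"
proof -
  have rescale: "\<beta> powr (-\<nu>) * n \<le> \<rho> \<longleftrightarrow> n \<le> \<rho> * \<beta> powr \<nu>" if "0 < \<beta>" for \<beta> n :: real
    using that by (simp add: powr_minus field_simps)
  have "varrho A R \<nu> x \<le> ereal \<rho> \<longleftrightarrow> (\<forall>\<beta> z. 0 < \<beta> \<longrightarrow> z \<in> Rmin A R \<beta> (A x) \<longrightarrow>
      ereal (\<beta> powr (-\<nu>) * norm (A x - A z)) \<le> ereal \<rho>)"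
    unfolding varrho_def Sup_le_iff by blast
  then show ?thesis
    by (simp add: rescale)
qed

lemma Rmin_bounds_of_varrho_le:
  fixes A :: "'a::real_vector \<Rightarrow> 'b::real_inner"
  assumes "proper_convex R" and "linear A" and "0 < \<alpha>"
    and "varrho A R \<nu> x \<le> ereal \<rho>"
    and xa: "xa \<in> Rmin A R \<alpha> (A x)" and xhat: "xhat \<in> Rmin A R \<alpha> g"
  shows "norm (g - A xhat) \<le> norm (g - A x) + \<rho> * \<alpha> powr \<nu>"
    and "norm (A xhat - A x) \<le> norm (g - A x) + \<rho> * \<alpha> powr \<nu>"
proof -
  have approx: "norm (A x - A xa) \<le> \<rho> * \<alpha> powr \<nu>"
    using assms(4) xa \<open>0 < \<alpha>\<close> unfolding varrho_le_iff by blast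
  note nonexp = Rmin_nonexpansive[OF assms(1-3) xhat xa]
  have "norm (g - A xhat) = norm (((g - A x) - (A xhat - A xa)) + (A x - A xa))"
    by (simp add: algebra_simps)
  also have "\<dots> \<le> norm ((g - A x) - (A xhat - A xa)) + norm (A x - A xa)"
    by (rule norm_triangle_ineq)
  finally show "norm (g - A xhat) \<le> norm (g - A x) + \<rho> * \<alpha> powr \<nu>"
    using nonexp(2) approx by linarith
  have "norm (A xhat - A x) = norm ((A xhat - A xa) - (A x - A xa))"
    by (simp add: algebra_simps)
  also have "\<dots> \<le> norm (A xhat - A xa) + norm (A x - A xa)"
    by (rule norm_triangle_ineq4)
  finally show "norm (A xhat - A x) \<le> norm (g - A x) + \<rho> * \<alpha> powr \<nu>"
    using nonexp(1) approx by linarith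
qed

lemma scaled_powr_le_powr:
  fixes \<nu> \<alpha> \<beta> :: real
  assumes "\<nu> \<le> 1" and "0 < \<beta>" and "\<beta> \<le> \<alpha>"
  shows "\<beta> / \<alpha> * \<alpha> powr \<nu> \<le> \<beta> powr \<nu>"
proof -
  have "\<beta> powr (1 - \<nu>) \<le> \<alpha> powr (1 - \<nu>)"
    using assms by (intro powr_mono2) auto
  then have "\<beta> / \<beta> powr \<nu> \<le> \<alpha> / \<alpha> powr \<nu>"
    using assms by (simp add: powr_diff)
  then show ?thesis
    using assms by (simp add: field_simps)
qed

lemma Rmin_iterate_le_powr:
  fixes A :: "'a::real_vector \<Rightarrow> 'b::real_inner"
  assumes "proper_convex R" and "linear A" and "\<nu> \<le> 1" and "0 < \<beta>" and "\<beta> \<le> \<alpha>"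
    and "0 \<le> C" and xhat: "xhat \<in> Rmin A R \<alpha> g"
    and residual: "norm (g - A xhat) \<le> C * \<alpha> powr \<nu>"
    and xb: "xb \<in> Rmin A R \<beta> (A xhat)"
  shows "norm (A xhat - A xb) \<le> C * \<beta> powr \<nu>"
proof -
  have "0 < \<alpha>"
    using \<open>0 < \<beta>\<close> \<open>\<beta> \<le> \<alpha>\<close> by simp
  have "norm (A xhat - A xb) \<le> \<beta> / \<alpha> * norm (g - A xhat)"
    by (rule Rmin_iterate_le[OF assms(1,2) \<open>0 < \<alpha>\<close> \<open>0 < \<beta>\<close> xhat xb])
  also have "\<dots> \<le> \<beta> / \<alpha> * (C * \<alpha> powr \<nu>)"
    using residual \<open>0 < \<alpha>\<close> \<open>0 < \<beta>\<close> by (intro mult_left_mono) auto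
  also have "\<dots> = C * (\<beta> / \<alpha> * \<alpha> powr \<nu>)"
    by simp
  also have "\<dots> \<le> C * \<beta> powr \<nu>"
    using scaled_powr_le_powr[OF \<open>\<nu> \<le> 1\<close> \<open>0 < \<beta>\<close> \<open>\<beta> \<le> \<alpha>\<close>] \<open>0 \<le> C\<close>
    by (rule mult_left_mono)
  finally show ?thesis .
qed

lemma varrho_Rmin_le:
  fixes A :: "'a::real_vector \<Rightarrow> 'b::real_inner"
  assumes "proper_convex R" and "linear A" and "0 < \<nu>" and "\<nu> \<le> 1" and "0 < \<alpha>"
    and "0 \<le> \<rho>" and "0 \<le> k"
    and Rmin_ne: "\<And>\<beta> h. 0 < \<beta> \<Longrightarrow> Rmin A R \<beta> h \<noteq> {}"
    and x: "varrho A R \<nu> x \<le> ereal \<rho>"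
    and data: "norm (g - A x) \<le> k * \<rho> * \<alpha> powr \<nu>"
    and xhat: "xhat \<in> Rmin A R \<alpha> g"
  shows "varrho A R \<nu> xhat \<le> ereal ((2 + k) * \<rho>)"
proof -
  obtain xa where xa: "xa \<in> Rmin A R \<alpha> (A x)"
    using Rmin_ne \<open>0 < \<alpha>\<close> by blast
  define D where "D = (k + 1) * \<rho> * \<alpha> powr \<nu>"
  have "D = k * \<rho> * \<alpha> powr \<nu> + \<rho> * \<alpha> powr \<nu>"
    unfolding D_def by (simp add: algebra_simps)
  then have residual: "norm (g - A xhat) \<le> D" and error: "norm (A xhat - A x) \<le> D"
    using Rmin_bounds_of_varrho_le[OF assms(1,2,5) x xa xhat] data by linarith+
  have "norm (A xhat - A xb) \<le> (2 + k) * \<rho> * \<beta> powr \<nu>"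
    if "0 < \<beta>" and xb: "xb \<in> Rmin A R \<beta> (A xhat)" for \<beta> xb
  proof (cases "\<beta> \<le> \<alpha>")
    case True
    have "0 \<le> (k + 1) * \<rho>"
      using \<open>0 \<le> k\<close> \<open>0 \<le> \<rho>\<close> by simp
    then have "norm (A xhat - A xb) \<le> (k + 1) * \<rho> * \<beta> powr \<nu>"
      using Rmin_iterate_le_powr[OF assms(1,2,4) \<open>0 < \<beta>\<close> True _ xhat _ xb] residual
      unfolding D_def by blast
    also have "\<dots> \<le> (2 + k) * \<rho> * \<beta> powr \<nu>"
      using \<open>0 \<le> \<rho>\<close> by (intro mult_right_mono) auto
    finally show ?thesis .
  next
    case False
    obtain xb' where xb': "xb' \<in> Rmin A R \<beta> (A x)"
      using Rmin_ne \<open>0 < \<beta>\<close> by blast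
    have approx: "norm (A x - A xb') \<le> \<rho> * \<beta> powr \<nu>"
      using x xb' \<open>0 < \<beta>\<close> unfolding varrho_le_iff by blast
    have "norm (A xhat - A xb) = norm (((A xhat - A x) - (A xb - A xb')) + (A x - A xb'))"
      by (simp add: algebra_simps)
    also have "\<dots> \<le> norm ((A xhat - A x) - (A xb - A xb')) + norm (A x - A xb')"
      by (rule norm_triangle_ineq)
    also have "\<dots> \<le> D + \<rho> * \<beta> powr \<nu>"
      using Rmin_nonexpansive(2)[OF assms(1,2) \<open>0 < \<beta>\<close> xb xb'] error approx by linarith
    also have "\<dots> \<le> (k + 1) * \<rho> * \<beta> powr \<nu> + \<rho> * \<beta> powr \<nu>"
      using False \<open>0 < \<nu>\<close> \<open>0 < \<alpha>\<close> \<open>0 \<le> k\<close> \<open>0 \<le> \<rho>\<close> unfolding D_def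
      by (simp add: mult_left_mono powr_mono2)
    also have "\<dots> = (2 + k) * \<rho> * \<beta> powr \<nu>"
      by (simp add: algebra_simps)
    finally show ?thesis .
  qed
  then show ?thesis
    unfolding varrho_le_iff by blast
qed


lemma parameter_choice_imp_delta_le:
  fixes \<nu> \<rho> c \<alpha> \<delta> :: real
  assumes "0 < \<nu>" and "0 < \<rho>" and "0 < c" and "0 < \<delta>"
    and "c * \<rho> powr (-1/\<nu>) * \<delta> powr (1/\<nu>) \<le> \<alpha>"
  shows "\<delta> \<le> c powr (-\<nu>) * \<rho> * \<alpha> powr \<nu>"
proof -
  have "(c * \<rho> powr (-1/\<nu>) * \<delta> powr (1/\<nu>)) powr \<nu> = c powr \<nu> * \<rho> powr (-1) * \<delta>"
    using assms(1-4) by (simp add: powr_mult powr_powr)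
  also have "\<dots> = c powr \<nu> * \<delta> / \<rho>"
    using assms(2) by (simp add: powr_neg_one)
  finally have "c powr \<nu> * \<delta> / \<rho> \<le> \<alpha> powr \<nu>"
    using assms by (metis powr_mono2 less_imp_le powr_ge_zero mult_nonneg_nonneg)
  then have "c powr \<nu> * \<delta> \<le> \<rho> * \<alpha> powr \<nu>"
    using assms(2) by (simp add: pos_divide_le_eq mult.commute)
  then show ?thesis
    using assms(3) by (simp add: powr_minus field_simps)
qed

theorem proposition3p11:
  fixes \<tau> :: "'a::banach topology"
    and R :: "'a \<Rightarrow> ereal"
    and A :: "'a \<Rightarrow> 'b::{real_inner, complete_space}"
    and \<nu> \<rho> c\<^sub>l \<alpha> \<delta> :: real
    and x xhat :: 'a
    and g\<delta> :: 'b
  assumes "locally_convex_hausdorff \<tau>"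
    and "proper_convex R"
    and "\<forall>c::real. compactin \<tau> {z. R z \<le> ereal c}"
    and "linear A"
    and "continuous_map \<tau> weak_topology A"
    and "0 < \<nu>" "\<nu> \<le> 1" "0 < \<rho>" "0 < c\<^sub>l" "0 < \<alpha>" "0 < \<delta>"
    and "x \<in> Kset A R \<nu> \<rho>"
    and "norm (g\<delta> - A x) \<le> \<delta>"
    and "xhat \<in> Rmin A R \<alpha> g\<delta>"
    and "c\<^sub>l * \<rho> powr (-1/\<nu>) * \<delta> powr (1/\<nu>) \<le> \<alpha>"
  shows "varrho A R \<nu> xhat \<le> ereal ((2 + c\<^sub>l powr (-\<nu>)) * \<rho>)"
proof -
  have "topspace \<tau> = UNIV" and "Hausdorff_space \<tau>"
    using assms(1) unfolding locally_convex_hausdorff_def by auto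
  moreover have "\<And>c. compactin \<tau> {z. R z \<le> ereal c}"
    using assms(3) by blast
  ultimately have Rmin_ne: "Rmin A R \<beta> h \<noteq> {}" if "0 < \<beta>" for \<beta> h
    by (rule Rmin_nonempty[OF _ _ _ assms(5) that assms(2)])
  have data: "norm (g\<delta> - A x) \<le> c\<^sub>l powr (-\<nu>) * \<rho> * \<alpha> powr \<nu>"
    using assms(13) parameter_choice_imp_delta_le[OF assms(6,8,9,11,15)] by linarith
  have x: "varrho A R \<nu> x \<le> ereal \<rho>"
    using assms(12) unfolding Kset_def by simp
  show ?thesis
    using assms(8) by (intro varrho_Rmin_le[OF assms(2,4,6,7,10) _ _ Rmin_ne x data assms(14)]) auto
qed


end
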